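(* Let $A_1,\dots,A_k$ be $2\times2$ real matrices with all entries strictly positive and norm $<1$, $d_i\in\mathbb R^2$, $T_i(x)=A_ix+d_i$, with $T_i(D)\subset D$ for all $i$ ($D$ the closed unit disc). There exists a constant $C$ such that for all $\theta,\theta'\in\mathcal Q_2$, all $n\in\mathbb N$ and all $\underline a\in\Sigma=\{1,\dots,k\}^{\mathbb N}$, \[ |a_1\cdots a_n|_\theta-|a_1\cdots a_n|_{\theta'}\le C\,|\theta-\theta'|. \]
   Context: $\mathbb{PR}^1$ is the space of lines through the origin, parametrised by the angle $\theta$ with the horizontal axis, and $|\theta-\theta'|$ is the angular distance. $\mathcal Q_2\subset\mathbb{PR}^1$ is the closed set of lines contained in the union of the closed second and fourth quadrants. For $\theta\in\mathbb{PR}^1$, $\pi_\theta$ is orthogonal projection onto the line through the origin perpendicular to $\theta$. For a word $w=a_1\cdots a_n$, $D_w=T_{a_1}\circ\cdots\circ T_{a_n}(D)$ and $|w|_\theta=-\log_2(|\pi_\theta(D_w)|/2)$, where $|\cdot|$ is the length of an interval. *)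

theory Defs
  imports "HOL-Analysis.Analysis"
begin

text \<open>Lines through the origin are parametrised by a real angle theta; the line is
spanned by (cos theta, sin theta). Angles differing by a multiple of pi give the same line.\<close>

definition dirvec :: "real \<Rightarrow> real^2" where
  "dirvec \<theta> = vector [cos \<theta>, sin \<theta>]"

definition normvec :: "real \<Rightarrow> real^2" where
  "normvec \<theta> = vector [- sin \<theta>, cos \<theta>]"

definition angdist :: "real \<Rightarrow> real \<Rightarrow> real" where
  "angdist \<theta> \<theta>' = (INF k::int. \<bar>\<theta> - \<theta>' - of_int k * pi\<bar>)"

text \<open>Q_2: lines contained in the union of the closed second and fourth quadrants.\<close>
definition Q2 :: "real set" where
  "Q2 = {\<theta>. \<forall>t::real. (t * cos \<theta> \<le> 0 \<and> t * sin \<theta> \<ge> 0) \<or> (t * cos \<theta> \<ge> 0 \<and> t * sin \<theta> \<le> 0)}"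

definition proj_perp :: "real \<Rightarrow> real^2 \<Rightarrow> real^2" where
  "proj_perp \<theta> x = (x \<bullet> normvec \<theta>) *\<^sub>R normvec \<theta>"

definition Disc :: "(real^2) set" where
  "Disc = cball 0 1"

definition affT :: "(nat \<Rightarrow> real^2^2) \<Rightarrow> (nat \<Rightarrow> real^2) \<Rightarrow> nat \<Rightarrow> real^2 \<Rightarrow> real^2" where
  "affT A d i x = A i *v x + d i"

definition Dword :: "(nat \<Rightarrow> real^2^2) \<Rightarrow> (nat \<Rightarrow> real^2) \<Rightarrow> nat list \<Rightarrow> (real^2) set" where
  "Dword A d w = foldr (\<lambda>i f. affT A d i \<circ> f) w id ` Disc"

text \<open>|w|_theta = - log_2 (|pi_theta(D_w)| / 2); the length of the interval is its diameter.\<close>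
definition wlen :: "(nat \<Rightarrow> real^2^2) \<Rightarrow> (nat \<Rightarrow> real^2) \<Rightarrow> nat list \<Rightarrow> real \<Rightarrow> real" where
  "wlen A d w \<theta> = - log 2 (diameter (proj_perp \<theta> ` Dword A d w) / 2)"

end

theory Submission
  imports Defs
begin

text \<open>Writing \<open>M\<^sub>w\<close> for the product of the linear parts along \<open>w\<close> and \<open>n\<^sub>\<theta>\<close> for the unit normal
of \<open>\<theta>\<close>, the projection of \<open>D\<^sub>w\<close> is an interval of length \<open>2 \<parallel>n\<^sub>\<theta> M\<^sub>w\<parallel>\<close>, so
\<open>|w|\<^sub>\<theta> = - log\<^sub>2 \<parallel>n\<^sub>\<theta> M\<^sub>w\<parallel>\<close>. Since every \<open>A\<^sub>i\<close> has positive entries, the rows of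
\<open>M\<^sub>w\<close> have comparable norms with a constant \<open>K\<close> independent of \<open>w\<close>; for a nonnegative unit
vector \<open>y\<close> the rows add up without cancellation, so \<open>\<parallel>y M\<^sub>w\<parallel>\<close> dominates every row up
to the factor \<open>K\<close>. Hence \<open>y \<mapsto> log \<parallel>y M\<^sub>w\<parallel>\<close> is Lipschitz on the nonnegative quarter of the
unit circle, uniformly in \<open>w\<close>. For \<open>\<theta> \<in> Q\<^sub>2\<close> the normal \<open>n\<^sub>\<theta>\<close> is, up to sign, such a
vector, namely its componentwise absolute value, which depends 1-Lipschitzly on \<open>\<theta>\<close> modulo \<open>\<pi>\<close>.\<close>

fun word_matrix :: "(nat \<Rightarrow> real^'n^'n) \<Rightarrow> nat list \<Rightarrow> real^'n^'n" where
  "word_matrix A [] = mat 1"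
| "word_matrix A (i # w) = A i ** word_matrix A w"

lemma foldr_affT_eq_affine:
  "\<exists>c. foldr (\<lambda>i f. affT A d i \<circ> f) w id = (\<lambda>x. word_matrix A w *v x + c)"
proof (induction w)
  case Nil
  show ?case by (intro exI[of _ 0]) auto
next
  case (Cons i w)
  then obtain c where "foldr (\<lambda>i f. affT A d i \<circ> f) w id = (\<lambda>x. word_matrix A w *v x + c)" ..
  then have "foldr (\<lambda>i f. affT A d i \<circ> f) (i # w) id = (\<lambda>x. A i *v (word_matrix A w *v x + c) + d i)"
    by (simp only: foldr.simps comp_apply) (simp add: affT_def comp_def)
  also have "\<dots> = (\<lambda>x. (A i ** word_matrix A w) *v x + (A i *v c + d i))"
    by (simp add: matrix_vector_mul_assoc matrix_vector_right_distrib add.assoc)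
  finally show ?case
    unfolding word_matrix.simps by (rule exI)
qed

lemma word_matrix_nonneg:
  assumes "\<And>i r c. i \<in> set w \<Longrightarrow> 0 \<le> A i $ r $ c"
  shows "0 \<le> word_matrix A w $ r $ c"
  using assms
  by (induction w arbitrary: r c) (auto simp: mat_def matrix_matrix_mult_def intro!: sum_nonneg)

lemma word_matrix_diag_pos:
  assumes "\<And>i r c. i \<in> set w \<Longrightarrow> 0 < A i $ r $ c"
  shows "0 < word_matrix A w $ r $ r"
  using assms
proof (induction w arbitrary: r)
  case (Cons i w)
  have A: "0 < A i $ r $ c" for r c
    using Cons.prems by simp
  have W: "0 \<le> word_matrix A w $ r $ c" for r c
    using Cons.prems by (intro word_matrix_nonneg) (auto intro: less_imp_le)
  have "0 < A i $ r $ r * word_matrix A w $ r $ r"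
    using A Cons by simp
  then show ?case
    using A W by (auto simp: matrix_matrix_mult_def less_imp_le intro!: sum_pos2[where i=r])
qed (simp add: mat_def)

lemma norm_le_norm_if_nonneg_le:
  fixes u v :: "real^'n"
  assumes "\<And>c. 0 \<le> u $ c" "\<And>c. u $ c \<le> v $ c"
  shows "norm u \<le> norm v"
  by (intro norm_le_componentwise_cart)
     (simp add: assms abs_of_nonneg order_trans[OF assms(2) abs_ge_self])

lemma matrix_mult_rows_comparable:
  fixes B :: "real^'n^'m" and P :: "real^'p^'n"
  assumes B: "\<And>r c. 0 \<le> B $ r $ c" and cmp: "\<And>r r' c. B $ r $ c \<le> K * B $ r' $ c"
    and P: "\<And>r c. 0 \<le> P $ r $ c" and K: "0 \<le> K"
  shows "norm ((B ** P) $ r) \<le> K * norm ((B ** P) $ r')"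
proof -
  have "norm ((B ** P) $ r) \<le> norm (K *\<^sub>R (B ** P) $ r')"
  proof (rule norm_le_norm_if_nonneg_le)
    fix c
    show "0 \<le> (B ** P) $ r $ c"
      using B P by (simp add: matrix_matrix_mult_def sum_nonneg)
    show "(B ** P) $ r $ c \<le> (K *\<^sub>R (B ** P) $ r') $ c"
      using cmp P by (simp add: matrix_matrix_mult_def sum_distrib_left mult.assoc[symmetric]
          mult_right_mono sum_mono)
  qed
  then show ?thesis using K by simp
qed

lemma mat_1_row: "(mat 1 :: 'a::zero_neq_one^'n^'n) $ r = axis r 1"
  by (simp add: mat_def axis_def vec_eq_iff)

lemma word_matrix_rows_comparable:
  assumes pos: "\<And>i r c. i \<in> set w \<Longrightarrow> 0 < A i $ r $ c"
    and cmp: "\<And>i r r' c. i \<in> set w \<Longrightarrow> A i $ r $ c \<le> K * A i $ r' $ c"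
    and K: "1 \<le> K"
  shows "norm (word_matrix A w $ r) \<le> K * norm (word_matrix A w $ r')"
proof (cases w)
  case Nil
  then show ?thesis using K by (simp add: mat_1_row norm_axis_1)
next
  case (Cons i w')
  have "norm ((A i ** word_matrix A w') $ r) \<le> K * norm ((A i ** word_matrix A w') $ r')"
    using pos cmp K Cons
    by (intro matrix_mult_rows_comparable word_matrix_nonneg) (auto intro: less_imp_le)
  then show ?thesis using Cons by simp
qed

lemma finite_positive_matrices_entry_ratio_bound:
  fixes A :: "'i \<Rightarrow> real^'n^'m"
  assumes "finite I" and pos: "\<And>i r c. i \<in> I \<Longrightarrow> 0 < A i $ r $ c"
  obtains K where "1 \<le> K" "\<And>i r r' c. i \<in> I \<Longrightarrow> A i $ r $ c \<le> K * A i $ r' $ c"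
proof
  let ?ratios = "(\<lambda>(i, r, r', c). A i $ r $ c / A i $ r' $ c) ` (I \<times> UNIV \<times> UNIV \<times> UNIV)"
  let ?K = "Max (insert 1 ?ratios)"
  show "1 \<le> ?K" using \<open>finite I\<close> by simp
  fix i r r' c assume "i \<in> I"
  then have "A i $ r $ c / A i $ r' $ c \<le> ?K"
    using \<open>finite I\<close> by (intro Max_ge) (auto intro!: rev_image_eqI[of "(i, r, r', c)"])
  then show "A i $ r $ c \<le> ?K * A i $ r' $ c"
    using pos[OF \<open>i \<in> I\<close>] by (simp add: divide_le_eq)
qed

lemma sum_power2_norm_le_power2_norm_sum:
  fixes v :: "'i \<Rightarrow> 'a::real_inner"
  assumes "finite S" and "\<And>r s. r \<in> S \<Longrightarrow> s \<in> S \<Longrightarrow> 0 \<le> v r \<bullet> v s"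
  shows "(\<Sum>r\<in>S. (norm (v r))\<^sup>2) \<le> (norm (\<Sum>r\<in>S. v r))\<^sup>2"
proof -
  have "(\<Sum>r\<in>S. (norm (v r))\<^sup>2) = (\<Sum>r\<in>S. v r \<bullet> v r)"
    by (simp add: power2_norm_eq_inner)
  also have "\<dots> \<le> (\<Sum>r\<in>S. \<Sum>s\<in>S. v r \<bullet> v s)"
    using assms by (intro sum_mono member_le_sum) auto
  also have "\<dots> = (norm (\<Sum>r\<in>S. v r))\<^sup>2"
    unfolding power2_norm_eq_inner inner_sum_left inner_sum_right by (rule sum.swap)
  finally show ?thesis .
qed

lemma vector_matrix_mult_eq_sum_rows:
  fixes x :: "real^'m" and M :: "real^'n^'m"
  shows "x v* M = (\<Sum>r\<in>UNIV. x $ r *\<^sub>R M $ r)"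
  by (simp add: vec_eq_iff vector_matrix_mult_def mult.commute)

lemma row_norm_le_norm_vector_matrix_mult:
  fixes y :: "real^'m" and M :: "real^'n^'m" and K :: real
  assumes y: "norm y = 1" "\<And>r. 0 \<le> y $ r" and M: "\<And>r c. 0 \<le> M $ r $ c"
    and cmp: "\<And>r r'. norm (M $ r) \<le> K * norm (M $ r')" and K: "0 \<le> K"
  shows "norm (M $ s) \<le> K * norm (y v* M)"
proof -
  have "(\<Sum>r\<in>UNIV. (y $ r)\<^sup>2) = 1"
    using y(1) by (simp add: norm_eq_1 inner_vec_def power2_eq_square)
  then have "(norm (M $ s))\<^sup>2 = (\<Sum>r\<in>UNIV. (y $ r)\<^sup>2 * (norm (M $ s))\<^sup>2)"
    by (simp add: sum_distrib_right[symmetric])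
  also have "\<dots> \<le> (\<Sum>r\<in>UNIV. (y $ r)\<^sup>2 * (K * norm (M $ r))\<^sup>2)"
    using cmp by (intro sum_mono mult_left_mono power_mono) auto
  also have "\<dots> = K\<^sup>2 * (\<Sum>r\<in>UNIV. (norm (y $ r *\<^sub>R M $ r))\<^sup>2)"
    by (simp add: sum_distrib_left power_mult_distrib mult_ac)
  also have "\<dots> \<le> K\<^sup>2 * (norm (y v* M))\<^sup>2"
  proof -
    have "0 \<le> (y $ r *\<^sub>R M $ r) \<bullet> (y $ r' *\<^sub>R M $ r')" for r r'
      using y(2) M by (simp add: inner_vec_def sum_nonneg)
    then show ?thesis
      unfolding vector_matrix_mult_eq_sum_rows
      by (intro mult_left_mono sum_power2_norm_le_power2_norm_sum) simp_all
  qed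
  also have "\<dots> = (K * norm (y v* M))\<^sup>2"
    by (simp add: power_mult_distrib)
  finally show ?thesis
    by (rule power2_le_imp_le) (use K in simp)
qed

lemma norm_vector_matrix_mult_le:
  fixes x y :: "real^'m" and M :: "real^'n^'m" and K :: real
  assumes y: "norm y = 1" "\<And>r. 0 \<le> y $ r" and M: "\<And>r c. 0 \<le> M $ r $ c"
    and cmp: "\<And>r r'. norm (M $ r) \<le> K * norm (M $ r')" and K: "0 \<le> K"
  shows "norm (x v* M) \<le> (1 + CARD('m) * K * norm (x - y)) * norm (y v* M)"
proof -
  have "norm ((x - y) v* M) \<le> (\<Sum>r\<in>UNIV. \<bar>(x - y) $ r\<bar> * norm (M $ r))"
    unfolding vector_matrix_mult_eq_sum_rows by (rule order_trans[OF norm_sum]) simp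
  also have "\<dots> \<le> (\<Sum>r\<in>(UNIV :: 'm set). norm (x - y) * (K * norm (y v* M)))"
  proof (rule sum_mono)
    fix r
    show "\<bar>(x - y) $ r\<bar> * norm (M $ r) \<le> norm (x - y) * (K * norm (y v* M))"
      using row_norm_le_norm_vector_matrix_mult[OF y M cmp K]
      by (intro mult_mono component_le_norm_cart) auto
  qed
  also have "\<dots> = CARD('m) * K * norm (x - y) * norm (y v* M)"
    by simp
  finally have "norm ((x - y) v* M) \<le> CARD('m) * K * norm (x - y) * norm (y v* M)" .
  moreover have "norm (x v* M) \<le> norm (y v* M) + norm ((x - y) v* M)"
    by (metis norm_triangle_ineq add.commute diff_add_cancel vector_matrix_left_distrib)
  ultimately show ?thesis
    by (simp add: algebra_simps)
qed

lemma log2_diff_le_of_le_mult: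
  fixes a b t :: real
  assumes "0 < a" "0 < b" "0 \<le> t" "a \<le> (1 + t) * b"
  shows "log 2 a - log 2 b \<le> t / ln 2"
proof -
  have "log 2 a - log 2 b = log 2 (a / b)"
    using assms by (simp add: log_divide)
  also have "\<dots> \<le> log 2 (1 + t)"
    using assms by (simp add: pos_divide_le_eq)
  also have "\<dots> \<le> t / ln 2"
    using assms by (simp add: log_def divide_right_mono ln_add_one_self_le_self)
  finally show ?thesis .
qed

lemma log_norm_vector_word_matrix_diff_le:
  fixes x y :: "real^'n" and K :: real
  assumes pos: "\<And>i r c. i \<in> set w \<Longrightarrow> 0 < A i $ r $ c"
    and cmp: "\<And>i r r' c. i \<in> set w \<Longrightarrow> A i $ r $ c \<le> K * A i $ r' $ c" and K: "1 \<le> K"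
    and x: "norm x = 1" "\<And>r. 0 \<le> x $ r" and y: "norm y = 1" "\<And>r. 0 \<le> y $ r"
  shows "log 2 (norm (x v* word_matrix A w)) - log 2 (norm (y v* word_matrix A w))
    \<le> CARD('n) * K / ln 2 * norm (x - y)"
proof -
  let ?M = "word_matrix A w"
  have K0: "0 \<le> K"
    using K by simp
  have M: "0 \<le> ?M $ r $ c" for r c
    using pos by (intro word_matrix_nonneg) (auto intro: less_imp_le)
  have rows: "norm (?M $ r) \<le> K * norm (?M $ r')" for r r'
    using pos cmp K by (rule word_matrix_rows_comparable)
  have "0 < norm (v v* ?M)" if "norm v = 1" "\<And>r. 0 \<le> v $ r" for v
  proof -
    have diag: "0 < ?M $ r $ r" for r
      using pos by (rule word_matrix_diag_pos)
    have row_pos: "0 < norm (?M $ r)" for r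
      using diag[of r] component_le_norm_cart[of "?M $ r" r] by linarith
    have "0 < K * norm (v v* ?M)"
      using less_le_trans[OF row_pos row_norm_le_norm_vector_matrix_mult[OF that M rows K0]] .
    then show ?thesis
      using K by (simp add: zero_less_mult_iff)
  qed
  moreover have "norm (x v* ?M) \<le> (1 + CARD('n) * K * norm (x - y)) * norm (y v* ?M)"
    by (rule norm_vector_matrix_mult_le[OF y M rows K0])
  ultimately have "log 2 (norm (x v* ?M)) - log 2 (norm (y v* ?M)) \<le> CARD('n) * K * norm (x - y) / ln 2"
    using x y K by (intro log2_diff_le_of_le_mult) auto
  then show ?thesis
    by simp
qed

definition vec_abs :: "real^'n \<Rightarrow> real^'n" where
  "vec_abs x = (\<chi> c. \<bar>x $ c\<bar>)"

lemma vec_abs_nonneg: "0 \<le> vec_abs x $ c"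
  by (simp add: vec_abs_def)

lemma norm_vec_abs: "norm (vec_abs x) = norm x"
  by (simp add: vec_abs_def norm_vec_def)

lemma norm_vec_abs_diff_le: "norm (vec_abs x - vec_abs y) \<le> norm (x - y)"
  by (intro norm_le_componentwise_cart) (simp add: vec_abs_def abs_triangle_ineq3)

lemma norm_normvec: "norm (normvec t) = 1"
  by (simp add: norm_eq_1 normvec_def inner_vec_def sum_2 power2_eq_square[symmetric])

lemma vec_abs_normvec_Q2:
  assumes "\<theta> \<in> Q2"
  shows "vec_abs (normvec \<theta>) = normvec \<theta> \<or> vec_abs (normvec \<theta>) = - normvec \<theta>"
proof -
  have "(cos \<theta> \<le> 0 \<and> 0 \<le> sin \<theta>) \<or> (0 \<le> cos \<theta> \<and> sin \<theta> \<le> 0)"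
    using assms unfolding Q2_def by (auto dest: spec[of _ 1])
  then show ?thesis
    by (auto simp: vec_abs_def normvec_def vec_eq_iff forall_2)
qed

lemma vec_abs_normvec_add_int_pi: "vec_abs (normvec (\<theta> + of_int j * pi)) = vec_abs (normvec \<theta>)"
proof -
  have s: "sin (of_int j * pi) = 0"
    by (auto simp: sin_zero_iff_int2)
  then have "cos (of_int j * pi) = 1 \<or> cos (of_int j * pi) = -1"
    using sin_cos_squared_add[of "of_int j * pi"] by (simp add: power2_eq_1_iff)
  then show ?thesis
    by (elim disjE) (simp_all add: vec_abs_def normvec_def vec_eq_iff forall_2 sin_add cos_add s)
qed

lemma norm_normvec_diff_le: "norm (normvec a - normvec b) \<le> \<bar>a - b\<bar>"
proof -
  have "(norm (normvec a - normvec b))\<^sup>2 = (sin a - sin b)\<^sup>2 + (cos a - cos b)\<^sup>2"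
    unfolding power2_norm_eq_inner
    by (simp add: normvec_def inner_vec_def sum_2 power2_eq_square algebra_simps)
  also have "\<dots> = 2 - 2 * cos (a - b)"
    by (simp add: cos_diff power2_diff algebra_simps)
  also have "\<dots> = 4 * (sin ((a - b) / 2))\<^sup>2"
  proof -
    have half: "cos (a - b) = cos (2 * ((a - b) / 2))"
      by (rule arg_cong[where f = cos]) simp
    show ?thesis
      unfolding half cos_double_sin by simp
  qed
  also have "\<dots> \<le> 4 * (\<bar>a - b\<bar> / 2)\<^sup>2"
    using power_mono[OF abs_sin_x_le_abs_x[of "(a - b) / 2"] abs_ge_zero, of 2] by simp
  also have "\<dots> = \<bar>a - b\<bar>\<^sup>2"
    by (simp add: power_divide)
  finally show ?thesis
    by (rule power2_le_imp_le) simp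
qed

lemma norm_vec_abs_normvec_diff_le_angdist:
  "norm (vec_abs (normvec \<theta>) - vec_abs (normvec \<theta>')) \<le> angdist \<theta> \<theta>'"
  unfolding angdist_def
proof (rule cINF_greatest)
  fix j :: int
  have "norm (vec_abs (normvec \<theta>) - vec_abs (normvec \<theta>'))
      = norm (vec_abs (normvec \<theta>) - vec_abs (normvec (\<theta>' + of_int j * pi)))"
    by (simp add: vec_abs_normvec_add_int_pi)
  also have "\<dots> \<le> norm (normvec \<theta> - normvec (\<theta>' + of_int j * pi))"
    by (rule norm_vec_abs_diff_le)
  also have "\<dots> \<le> \<bar>\<theta> - \<theta>' - of_int j * pi\<bar>"
    using norm_normvec_diff_le[of \<theta> "\<theta>' + of_int j * pi"] by (simp add: algebra_simps)
  finally show "norm (vec_abs (normvec \<theta>) - vec_abs (normvec \<theta>')) \<le> \<bar>\<theta> - \<theta>' - of_int j * pi\<bar>" .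
qed simp

lemma diameter_scaled_functional_image_cball:
  fixes v :: "'a::euclidean_space" and u :: "'b::real_normed_vector"
  shows "diameter ((\<lambda>x. (x \<bullet> v + b) *\<^sub>R u) ` cball 0 1) = 2 * norm v * norm u"
proof -
  let ?p = "\<lambda>x. (x \<bullet> v + b) *\<^sub>R u"
  have dist: "norm (?p x - ?p y) = \<bar>(x - y) \<bullet> v\<bar> * norm u" for x y
  proof -
    have "?p x - ?p y = ((x - y) \<bullet> v) *\<^sub>R u"
      by (simp add: inner_diff_left algebra_simps)
    then show ?thesis
      by simp
  qed
  have bounded: "bounded (?p ` cball 0 1)"
    by (intro compact_imp_bounded compact_continuous_image compact_cball continuous_intros)
  have "diameter (?p ` cball 0 1) \<le> 2 * norm v * norm u"
  proof (rule diameter_le)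
    fix p q assume "p \<in> ?p ` cball 0 1" "q \<in> ?p ` cball 0 1"
    then obtain x y where xy: "norm x \<le> 1" "norm y \<le> 1" and pq: "p = ?p x" "q = ?p y"
      by auto
    have "\<bar>(x - y) \<bullet> v\<bar> \<le> norm (x - y) * norm v"
      by (rule Cauchy_Schwarz_ineq2)
    also have "\<dots> \<le> 2 * norm v"
      using xy norm_triangle_ineq4[of x y] by (intro mult_right_mono) auto
    finally show "norm (p - q) \<le> 2 * norm v * norm u"
      unfolding pq dist by (intro mult_right_mono) auto
  qed simp
  moreover have "2 * norm v * norm u \<le> diameter (?p ` cball 0 1)"
  proof (cases "v = 0")
    case True
    then show ?thesis
      using diameter_ge_0[OF bounded] by simp
  next
    case False
    define e where "e = v /\<^sub>R norm v"
    have "norm e = 1"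
      using False by (simp add: e_def)
    then have "dist (?p e) (?p (- e)) \<le> diameter (?p ` cball 0 1)"
      by (intro diameter_bounded_bound bounded imageI) auto
    moreover have "(e - - e) \<bullet> v = 2 * norm v"
    proof -
      have "e \<bullet> v = norm v"
        using False by (simp add: e_def dot_square_norm power2_eq_square)
      then show ?thesis
        by (simp add: inner_add_left)
    qed
    ultimately show ?thesis
      unfolding dist_norm dist by simp
  qed
  ultimately show ?thesis
    by simp
qed

lemma wlen_eq_log_norm: "wlen A d w \<theta> = - log 2 (norm (normvec \<theta> v* word_matrix A w))"
proof -
  let ?M = "word_matrix A w" and ?n = "normvec \<theta>"
  obtain c where c: "foldr (\<lambda>i f. affT A d i \<circ> f) w id = (\<lambda>x. ?M *v x + c)"
    using foldr_affT_eq_affine by blast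
  have "(?M *v x + c) \<bullet> ?n = x \<bullet> (?n v* ?M) + c \<bullet> ?n" for x
    by (simp add: inner_add_left) (metis dot_lmul_matrix inner_commute)
  then have "proj_perp \<theta> ` Dword A d w = (\<lambda>x. (x \<bullet> (?n v* ?M) + c \<bullet> ?n) *\<^sub>R ?n) ` cball 0 1"
    by (simp add: Dword_def c Disc_def proj_perp_def image_image)
  then show ?thesis
    by (simp add: wlen_def diameter_scaled_functional_image_cball norm_normvec)
qed

lemma norm_vec_abs_normvec_vector_matrix_mult:
  assumes "\<theta> \<in> Q2"
  shows "norm (vec_abs (normvec \<theta>) v* M) = norm (normvec \<theta> v* M)"
proof -
  have "(- x) v* M = - (x v* M)" for x :: "real^2"
    by (simp add: vec_eq_iff vector_matrix_mult_def sum_negf)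
  then show ?thesis
    using vec_abs_normvec_Q2[OF assms] by auto
qed

theorem lemma5p1:
  fixes k :: nat and A :: "nat \<Rightarrow> real^2^2" and d :: "nat \<Rightarrow> real^2"
  assumes pos: "\<And>i r c. i \<in> {1..k} \<Longrightarrow> A i $ r $ c > 0"
    and nrm: "\<And>i. i \<in> {1..k} \<Longrightarrow> onorm (\<lambda>x. A i *v x) < 1"
    and inv: "\<And>i. i \<in> {1..k} \<Longrightarrow> affT A d i ` Disc \<subseteq> Disc"
  shows "\<exists>C. \<forall>\<theta> \<theta>' n (a :: nat \<Rightarrow> nat).
           \<theta> \<in> Q2 \<longrightarrow> \<theta>' \<in> Q2 \<longrightarrow> (\<forall>j. a j \<in> {1..k}) \<longrightarrow>
           wlen A d (map a [1..<n+1]) \<theta> - wlen A d (map a [1..<n+1]) \<theta>' \<le> C * angdist \<theta> \<theta>'"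
proof -
  obtain K where K: "1 \<le> K" and cmp: "\<And>i r r' c. i \<in> {1..k} \<Longrightarrow> A i $ r $ c \<le> K * A i $ r' $ c"
    using finite_positive_matrices_entry_ratio_bound[of "{1..k}" A] pos by blast
  have bound: "wlen A d w \<theta> - wlen A d w \<theta>' \<le> CARD(2) * K / ln 2 * angdist \<theta> \<theta>'"
    if Q2: "\<theta> \<in> Q2" "\<theta>' \<in> Q2" and w: "set w \<subseteq> {1..k}" for \<theta> \<theta>' w
  proof -
    let ?x = "vec_abs (normvec \<theta>')" and ?y = "vec_abs (normvec \<theta>)"
    have "wlen A d w \<theta> - wlen A d w \<theta>'
        = log 2 (norm (?x v* word_matrix A w)) - log 2 (norm (?y v* word_matrix A w))"
      using Q2 by (simp add: wlen_eq_log_norm norm_vec_abs_normvec_vector_matrix_mult)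
    also have "\<dots> \<le> CARD(2) * K / ln 2 * norm (?x - ?y)"
      using w pos cmp K
      by (intro log_norm_vector_word_matrix_diff_le) (auto simp: norm_vec_abs norm_normvec vec_abs_nonneg)
    also have "\<dots> \<le> CARD(2) * K / ln 2 * angdist \<theta> \<theta>'"
      using K norm_vec_abs_normvec_diff_le_angdist[of \<theta> \<theta>']
      by (intro mult_left_mono) (auto simp: norm_minus_commute)
    finally show ?thesis .
  qed
  show ?thesis
  proof (intro exI[of _ "CARD(2) * K / ln 2"] allI impI)
    fix \<theta> \<theta>' n and a :: "nat \<Rightarrow> nat"
    assume "\<theta> \<in> Q2" "\<theta>' \<in> Q2" "\<forall>j. a j \<in> {1..k}"
    then show "wlen A d (map a [1..<n+1]) \<theta> - wlen A d (map a [1..<n+1]) \<theta>'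
        \<le> CARD(2) * K / ln 2 * angdist \<theta> \<theta>'"
      by (intro bound) auto
  qed
qed

end
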